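(* Let $\sigma,\lambda\in(0,1/3)$ and $r>0$. There exists $C = C(\lambda,\sigma)$ such that the following holds. Let $a_1,\dots,a_n$ be real numbers and suppose there are disjoint sets $I_1, I_2 \subseteq [n]$ with $|I_1|,|I_2|\ge\sigma n$ such that $|a_i - a_j|\ge r$ for all $i\in I_1$, $j\in I_2$. Then for every integer $m\in[\lambda n,(1-\lambda)n]$, \[\mathcal{L}\Big(\sum_{i=1}^n a_ib_i, r\Big) \le \frac{C}{\sqrt{n}},\] where $(b_1,\dots,b_n)$ is uniformly distributed on $\{0,1\}^n_m$.
   Context: $\{0,1\}^n_m$ is the set of vectors in $\{0,1\}^n$ with coordinate sum $m$. For a random variable $\xi$ and $r\ge0$, $\mathcal{L}(\xi,r)=\sup_{z\in\mathbb{R}}\mathbb{P}[|\xi-z|\le r]$. *)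

theory Defs
  imports "HOL-Probability.Probability"
begin

definition slice01 :: "nat \<Rightarrow> nat \<Rightarrow> (nat \<Rightarrow> real) set" where
  "slice01 n m = {b. (\<forall>i<n. b i = 0 \<or> b i = 1) \<and> (\<forall>i\<ge>n. b i = 0) \<and> (\<Sum>i<n. b i) = real m}"

definition levy_conc :: "real pmf \<Rightarrow> real \<Rightarrow> real" where
  "levy_conc p r = (SUP z. measure_pmf.prob p {x. \<bar>x - z\<bar> \<le> r})"

end

(*
  Pair k = min |I1| |I2| elements u_i of I1 with distinct elements v_i of I2.  A set S in the
  slice splits the pair i if it contains exactly one of u_i, v_i.  Re-splitting the q pairs split
  by S in all 2^q ways gives the cube of S; the cubes partition the slice.  Along a cube,
  sum a S = c + (sum over i in T of a v_i - a u_i), where every step has size at least r, so by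
  Erdos' Sperner-based Littlewood-Offord bound a cube puts mass at most
  3 (q choose q div 2) / 2^q <= 3 / sqrt (q + 1) into any interval of length 2r.  Over the slice,
  the number of pairs with u_i in S and v_i outside S has mean mu >= sigma lam^2 n and
  variance O(n), so by Chebyshev q >= mu / 2 except on a set of probability O(1/n).
*)

theory Submission
  imports Defs
begin

section \<open>Sperner's theorem and the Littlewood--Offord bound\<close>

definition antichain :: "'a set set \<Rightarrow> bool" where
  "antichain F \<longleftrightarrow> (\<forall>A\<in>F. \<forall>B\<in>F. A \<subseteq> B \<longrightarrow> A = B)"

lemma card_div_choose_eq_sum:
  assumes "finite Q" "A \<subset> Q"
  shows "real (card Q) / real (card Q choose card A)
    = (\<Sum>x\<in>Q - A. 1 / real (card (Q - {x}) choose card A))"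
proof -
  have lt: "card A < card Q" using assms by (simp add: psubset_card_mono)
  have "real (card Q - card A) * real (card Q choose card A)
      = real (card Q) * real ((card Q - 1) choose card A)"
    using binomial_absorb_comp[of "card Q" "card A"] by (metis of_nat_mult)
  moreover have "card (Q - A) = card Q - card A"
    using assms by (meson card_Diff_subset finite_subset psubset_imp_subset)
  moreover have "card (Q - {x}) = card Q - 1" if "x \<in> Q - A" for x
    using that assms by simp
  ultimately show ?thesis
    using lt by (simp add: field_simps)
qed

lemma LYM_inequality:
  assumes "finite Q" "F \<subseteq> Pow Q" "antichain F"
  shows "(\<Sum>A\<in>F. 1 / real (card Q choose card A)) \<le> 1"
  using assms
proof (induction "card Q" arbitrary: Q F)
  case 0
  then have "F \<subseteq> {{}}" by auto
  then show ?case by (auto simp: subset_singleton_iff)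
next
  case (Suc q Q F)
  have "finite F" using Suc.prems by (meson finite_Pow_iff finite_subset)
  show ?case
  proof (cases "Q \<in> F")
    case True
    then have "F = {Q}" using Suc.prems(2,3) unfolding antichain_def by blast
    then show ?thesis by simp
  next
    case False
    then have proper: "A \<subset> Q" if "A \<in> F" for A
      using that Suc.prems(2) by blast
    have "real (card Q) * (\<Sum>A\<in>F. 1 / real (card Q choose card A))
        = (\<Sum>A\<in>F. \<Sum>x\<in>{x\<in>Q. x \<notin> A}. 1 / real (card (Q - {x}) choose card A))"
      unfolding sum_distrib_left
      by (intro sum.cong refl) (simp add: card_div_choose_eq_sum[OF Suc.prems(1) proper] set_diff_eq)
    also have "\<dots> = (\<Sum>x\<in>Q. \<Sum>A\<in>{A\<in>F. x \<notin> A}. 1 / real (card (Q - {x}) choose card A))"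
      using \<open>finite F\<close> Suc.prems(1) by (rule sum.swap_restrict)
    also have "\<dots> \<le> (\<Sum>x\<in>Q. 1)"
    proof (intro sum_mono Suc.hyps)
      fix x assume "x \<in> Q"
      then show "q = card (Q - {x})" using Suc.hyps(2) Suc.prems(1) by simp
      show "finite (Q - {x})" "{A \<in> F. x \<notin> A} \<subseteq> Pow (Q - {x})"
        using Suc.prems(1,2) by auto
      show "antichain {A \<in> F. x \<notin> A}" using Suc.prems(3) unfolding antichain_def by auto
    qed
    finally show ?thesis using Suc.hyps(2) by simp
  qed
qed

theorem Sperner:
  assumes "finite Q" "F \<subseteq> Pow Q" "antichain F"
  shows "card F \<le> card Q choose (card Q div 2)"
proof -
  let ?M = "real (card Q choose (card Q div 2))"
  have "real (card F) = (\<Sum>A\<in>F. 1)" by simp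
  also have "\<dots> \<le> (\<Sum>A\<in>F. ?M / real (card Q choose card A))"
  proof (rule sum_mono)
    fix A assume "A \<in> F"
    then have "card A \<le> card Q" using assms by (meson PowD card_mono subsetD)
    then show "1 \<le> ?M / real (card Q choose card A)"
      using binomial_maximum[of "card Q" "card A"] by simp
  qed
  also have "\<dots> = ?M * (\<Sum>A\<in>F. 1 / real (card Q choose card A))"
    by (simp add: sum_distrib_left)
  also have "\<dots> \<le> ?M"
    using LYM_inequality[OF assms] by (simp add: mult_left_le)
  finally show ?thesis by simp
qed

lemma antichain_sum_window:
  fixes e :: "'a \<Rightarrow> real"
  assumes "finite Q" "\<forall>i\<in>Q. e i \<ge> r" "r > 0"
  shows "antichain {T. T \<subseteq> Q \<and> w \<le> sum e T \<and> sum e T < w + r}"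
  unfolding antichain_def
proof (intro ballI impI)
  fix A B assume A: "A \<in> {T. T \<subseteq> Q \<and> w \<le> sum e T \<and> sum e T < w + r}"
    and B: "B \<in> {T. T \<subseteq> Q \<and> w \<le> sum e T \<and> sum e T < w + r}" and "A \<subseteq> B"
  show "A = B"
  proof (rule ccontr)
    assume "A \<noteq> B"
    then obtain x where x: "x \<in> B - A" using \<open>A \<subseteq> B\<close> by blast
    have "finite B" "B \<subseteq> Q" using B assms(1) finite_subset by auto
    then have "sum e B = sum e A + sum e (B - A)"
      using \<open>A \<subseteq> B\<close> by (metis add.commute sum.subset_diff)
    moreover have "e x \<le> sum e (B - A)"
      using \<open>finite B\<close> \<open>B \<subseteq> Q\<close> x assms(2,3) by (intro member_le_sum) force+
    moreover have "e x \<ge> r" using x \<open>B \<subseteq> Q\<close> assms(2) by auto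
    ultimately show False using A B by auto
  qed
qed

lemma sum_abs_flip_negative:
  fixes d :: "'a \<Rightarrow> real"
  assumes "finite Q" "T \<subseteq> Q"
  defines "N \<equiv> {i \<in> Q. d i < 0}"
  shows "(\<Sum>i\<in>(T - N) \<union> (N - T). \<bar>d i\<bar>) = sum d T + (\<Sum>i\<in>N. \<bar>d i\<bar>)"
proof -
  have "finite T" "finite N" using assms finite_subset unfolding N_def by auto
  have "sum d T = sum d (T - N) + sum d (T \<inter> N)"
    using \<open>finite T\<close> by (metis add.commute sum.Int_Diff)
  also have "sum d (T - N) = (\<Sum>i\<in>T - N. \<bar>d i\<bar>)"
    unfolding N_def using assms(2) by (intro sum.cong) auto
  also have "sum d (T \<inter> N) = - (\<Sum>i\<in>T \<inter> N. \<bar>d i\<bar>)"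
    unfolding N_def by (simp add: sum_negf[symmetric])
  finally have "sum d T = (\<Sum>i\<in>T - N. \<bar>d i\<bar>) - (\<Sum>i\<in>T \<inter> N. \<bar>d i\<bar>)" by simp
  moreover have "(\<Sum>i\<in>(T - N) \<union> (N - T). \<bar>d i\<bar>) = (\<Sum>i\<in>T - N. \<bar>d i\<bar>) + (\<Sum>i\<in>N - T. \<bar>d i\<bar>)"
    using \<open>finite T\<close> \<open>finite N\<close> by (intro sum.union_disjoint) auto
  moreover have "(\<Sum>i\<in>N. \<bar>d i\<bar>) = (\<Sum>i\<in>T \<inter> N. \<bar>d i\<bar>) + (\<Sum>i\<in>N - T. \<bar>d i\<bar>)"
    using \<open>finite N\<close> by (metis Int_commute sum.Int_Diff)
  ultimately show ?thesis by simp
qed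

text \<open>Erdos' bound.  After flipping the negative steps, each of the three half-open windows
  of length r that cover [z - r, z + r] picks out an antichain.\<close>
theorem littlewood_offord_count:
  fixes d :: "'a \<Rightarrow> real"
  assumes fin: "finite Q" and "r > 0" and big: "\<forall>i\<in>Q. \<bar>d i\<bar> \<ge> r"
  shows "card {T. T \<subseteq> Q \<and> \<bar>sum d T - z\<bar> \<le> r} \<le> 3 * (card Q choose (card Q div 2))"
proof -
  define N where "N = {i\<in>Q. d i < 0}"
  define flip where "flip T = (T - N) \<union> (N - T)" for T
  define e where "e i = \<bar>d i\<bar>" for i
  define W where "W w = {T. T \<subseteq> Q \<and> w \<le> sum e T \<and> sum e T < w + r}" for w
  define z' where "z' = z + sum e N"
  have sum_flip: "sum e (flip T) = sum d T + sum e N" if "T \<subseteq> Q" for T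
    using sum_abs_flip_negative[OF fin that] unfolding flip_def e_def N_def .
  have "flip (flip T) = T" for T unfolding flip_def by blast
  then have "inj flip" by (metis injI)
  define G where "G = {T. T \<subseteq> Q \<and> \<bar>sum d T - z\<bar> \<le> r}"
  have "flip ` G \<subseteq> W (z' - r) \<union> W z' \<union> W (z' + r)"
  proof
    fix T' assume "T' \<in> flip ` G"
    then obtain T where T: "T \<subseteq> Q" "\<bar>sum d T - z\<bar> \<le> r" and T': "T' = flip T"
      unfolding G_def by blast
    have "T' \<subseteq> Q" unfolding T' flip_def N_def using T(1) by blast
    moreover have "\<bar>sum e T' - z'\<bar> \<le> r" unfolding T' z'_def sum_flip[OF T(1)] using T(2) by simp
    ultimately show "T' \<in> W (z' - r) \<union> W z' \<union> W (z' + r)" unfolding W_def using \<open>r > 0\<close> by auto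
  qed
  moreover have "finite (W w)" for w unfolding W_def using fin by simp
  ultimately have "card (flip ` G) \<le> card (W (z' - r) \<union> W z' \<union> W (z' + r))"
    by (intro card_mono) auto
  then have "card G \<le> card (W (z' - r) \<union> W z' \<union> W (z' + r))"
    using \<open>inj flip\<close> by (simp add: card_image inj_on_subset[of flip UNIV])
  also have "\<dots> \<le> card (W (z' - r)) + card (W z') + card (W (z' + r))"
    by (meson add_le_mono card_Un_le le_refl order_trans)
  also have "\<dots> \<le> 3 * (card Q choose (card Q div 2))"
  proof -
    have "card (W w) \<le> card Q choose (card Q div 2)" for w
      unfolding W_def using big \<open>r > 0\<close>
      by (intro Sperner fin antichain_sum_window) (auto simp: e_def)
    from this[of "z' - r"] this[of z'] this[of "z' + r"] show ?thesis by linarith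
  qed
  finally show ?thesis unfolding G_def .
qed

section \<open>Binomial coefficients and elementary estimates\<close>

lemma central_binomial_Suc:
  "Suc t * ((2 * Suc t) choose Suc t) = 2 * (2 * t + 1) * ((2 * t) choose t)"
proof -
  have "Suc t * (Suc (2 * t) choose t) = Suc t * (Suc (2 * t) choose Suc t)"
    using Suc_times_binomial_add[of t t] by (simp add: mult_2)
  also have "\<dots> = (2 * t + 1) * ((2 * t) choose t)"
    using Suc_times_binomial[of t "2 * t"] by simp
  finally have "Suc t * (Suc (2 * t) choose t) = (2 * t + 1) * ((2 * t) choose t)" .
  moreover have "Suc t * ((2 * Suc t) choose Suc t) = 2 * Suc t * (Suc (2 * t) choose t)"
    using Suc_times_binomial[of t "Suc (2 * t)"] by simp
  ultimately show ?thesis by (metis mult.assoc)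
qed

lemma central_binomial_sq_le: "(real ((2 * t) choose t) / 4 ^ t)\<^sup>2 * (2 * real t + 1) \<le> 1"
proof (induction t)
  case 0
  then show ?case by simp
next
  case (Suc t)
  define e where "e = real ((2 * t) choose t) / 4 ^ t"
  define c where "c = real ((2 * Suc t) choose Suc t)"
  have "real (Suc t * ((2 * Suc t) choose Suc t)) = real (2 * (2 * t + 1) * ((2 * t) choose t))"
    by (simp only: central_binomial_Suc)
  then have "(real t + 1) * c = 2 * (2 * real t + 1) * real ((2 * t) choose t)"
    unfolding c_def by (simp del: binomial_Suc_Suc add: algebra_simps)
  then have c: "c = 2 * (2 * real t + 1) * real ((2 * t) choose t) / (real t + 1)"
    by (simp add: field_simps)
  have step: "c / 4 ^ Suc t = e * (2 * real t + 1) / (2 * real t + 2)"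
    unfolding c e_def by (simp add: divide_simps) (simp add: algebra_simps)
  have "(e * (2 * real t + 1) / (2 * real t + 2))\<^sup>2 * (2 * real t + 3)
      = (e\<^sup>2 * (2 * real t + 1)) * ((2 * real t + 1) * (2 * real t + 3) / (2 * real t + 2)\<^sup>2)"
    by (simp add: field_simps power2_eq_square)
  also have "\<dots> \<le> 1 * 1"
  proof (rule mult_mono)
    show "e\<^sup>2 * (2 * real t + 1) \<le> 1" using Suc.IH unfolding e_def .
    have "(2 * real t + 1) * (2 * real t + 3) \<le> (2 * real t + 2)\<^sup>2"
      by (simp add: power2_eq_square algebra_simps)
    then show "(2 * real t + 1) * (2 * real t + 3) / (2 * real t + 2)\<^sup>2 \<le> 1" by simp
  qed auto
  finally show ?case using step unfolding c_def by (simp add: algebra_simps)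
qed

lemma central_binomial_le: "real (q choose (q div 2)) / 2 ^ q \<le> 1 / sqrt (q + 1)"
proof -
  define x where "x = real (q choose (q div 2)) / 2 ^ q"
  have sq: "x\<^sup>2 * (q + 1) \<le> 1"
  proof (cases "even q")
    case True
    then obtain t where "q = 2 * t" by blast
    then show ?thesis using central_binomial_sq_le[of t] unfolding x_def by (simp add: power_mult add.commute)
  next
    case False
    then obtain t where q: "q = 2 * t + 1" using oddE by blast
    define c where "c = real ((2 * Suc t) choose Suc t)"
    have "Suc t * ((2 * Suc t) choose Suc t) = Suc t * (2 * (q choose (q div 2)))"
      using Suc_times_binomial[of t q] q by (simp del: binomial_Suc_Suc)
    then have "(2 * Suc t) choose Suc t = 2 * (q choose (q div 2))"
      by (simp only: mult_cancel_left nat.distinct simp_thms)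
    then have "real (q choose (q div 2)) = c / 2"
      unfolding c_def by (simp del: binomial_Suc_Suc)
    moreover have "(2::real) ^ q = 4 ^ Suc t / 2"
      using q by (simp add: power_mult)
    ultimately have eq: "real (q choose (q div 2)) / 2 ^ q = c / 4 ^ Suc t"
      by (simp add: field_simps)
    have "(c / 4 ^ Suc t)\<^sup>2 * (q + 1) \<le> (c / 4 ^ Suc t)\<^sup>2 * (2 * Suc t + 1)"
      using q by (intro mult_left_mono) auto
    also have "\<dots> = (c / 4 ^ Suc t)\<^sup>2 * (2 * real (Suc t) + 1)" by simp
    also have "\<dots> \<le> 1"
      using central_binomial_sq_le[of "Suc t"] unfolding c_def .
    finally show ?thesis unfolding x_def eq .
  qed
  have "x * sqrt (q + 1) = sqrt (x\<^sup>2 * (q + 1))"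
    unfolding x_def by (simp add: real_sqrt_mult)
  also have "\<dots> \<le> 1" using sq by simp
  finally show ?thesis unfolding x_def by (simp add: field_simps)
qed

lemma binomial_pair_split_eq:
  assumes "1 \<le> m" "m < n"
  shows "((n - 2) choose (m - 1)) * (n * (n - 1)) = (n choose m) * (m * (n - m))"
proof -
  have "(n choose m) * (m * (n - m)) = m * (n * ((n - 1) choose m))"
    using binomial_absorb_comp[of n m] by (metis mult.assoc mult.commute)
  also have "\<dots> = n * ((n - 1) * ((n - 2) choose (m - 1)))"
    using times_binomial_minus1_eq[of m "n - 1"] assms by (simp add: numeral_2_eq_2)
  finally show ?thesis by simp
qed

lemma real_binomial_pair_split_eq:
  assumes "1 \<le> m" "m < n"
  shows "real ((n - 2) choose (m - 1)) * (real n * (real n - 1))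
    = real (n choose m) * (real m * (real n - real m))"
  using arg_cong[OF binomial_pair_split_eq[OF assms], of real] assms by (simp add: of_nat_diff)

lemma binomial_pair_split_ratios:
  assumes m: "2 \<le> m" "m + 2 \<le> n"
  defines "p \<equiv> real ((n - 2) choose (m - 1)) / real (n choose m)"
    and "p' \<equiv> real ((n - 4) choose (m - 2)) / real (n choose m)"
  shows "p \<le> 1" "p' * ((real n - 2) * (real n - 3)) \<le> p\<^sup>2 * (real n * (real n - 1))"
proof -
  have "real (n choose m) > 0" using m by simp
  have R1: "p * (real n * (real n - 1)) = real m * (real n - real m)"
    using real_binomial_pair_split_eq[of m n] m \<open>real (n choose m) > 0\<close> unfolding p_def
    by (simp add: field_simps)
  have R2: "p' * ((real n - 2) * (real n - 3)) = p * ((real m - 1) * (real n - real m - 1))"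
  proof -
    have "n - 2 - 2 = n - 4" "m - 1 - 1 = m - 2" by auto
    then show ?thesis
      using real_binomial_pair_split_eq[of "m - 1" "n - 2"] m unfolding p_def p'_def
      by (simp add: of_nat_diff field_simps)
  qed
  have "real m * (real n - real m) \<le> real n * (real n - 1)"
    using m by (intro mult_mono) auto
  moreover have "real n * (real n - 1) > 0" using m by simp
  ultimately show "p \<le> 1" using R1
    by (metis mult_le_cancel_right2 linorder_not_less order_less_le_trans)
  have "p' * ((real n - 2) * (real n - 3)) \<le> p * (real m * (real n - real m))"
    unfolding R2 using m by (intro mult_left_mono mult_mono) (auto simp: p_def)
  also have "\<dots> = p\<^sup>2 * (real n * (real n - 1))"
    unfolding R1[symmetric] by (simp add: power2_eq_square)
  finally show "p' * ((real n - 2) * (real n - 3)) \<le> p\<^sup>2 * (real n * (real n - 1))" .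
qed

text \<open>The left-hand side is the variance of the number of pairs with first element inside and
  second element outside a random set of the slice: p and p' are the probabilities of this event
  for one, resp. two distinct, fixed pairs.\<close>
lemma pair_variance_arith:
  fixes p p' n k :: real
  assumes p: "0 \<le> p" "p \<le> 1" and "0 \<le> p'"
    and pp: "p' * ((n - 2) * (n - 3)) \<le> p\<^sup>2 * (n * (n - 1))" and n: "n \<ge> 6" and "k \<ge> 0"
  shows "k * p + k * (k - 1) * p' - k\<^sup>2 * p\<^sup>2 \<le> k + 16 * k\<^sup>2 / n"
proof -
  have d: "(n - 2) * (n - 3) > 0" using n by simp
  have "p' - p\<^sup>2 \<le> p\<^sup>2 * ((n * (n - 1)) / ((n - 2) * (n - 3)) - 1)"
    using pp d by (simp add: field_simps)
  also have "\<dots> = p\<^sup>2 * ((4 * n - 6) / ((n - 2) * (n - 3)))"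
    using d by (simp add: field_simps)
  also have "\<dots> \<le> (4 * n - 6) / ((n - 2) * (n - 3))"
    using p d n by (intro mult_left_le_one_le) (auto simp: power_le_one)
  also have "\<dots> \<le> 16 / n"
  proof -
    have "16 * ((n - 2) * (n - 3)) - (4 * n - 6) * n = (n - 6) * (12 * n - 2) + 84"
      by (simp add: algebra_simps)
    moreover have "(n - 6) * (12 * n - 2) \<ge> 0" using n by simp
    ultimately have "(4 * n - 6) * n \<le> 16 * ((n - 2) * (n - 3))" by linarith
    then show ?thesis using d n by (simp add: field_simps)
  qed
  finally have "p' - p\<^sup>2 \<le> 16 / n" .
  have "k * (k - 1) * p' \<le> k\<^sup>2 * p'"
    using \<open>k \<ge> 0\<close> \<open>0 \<le> p'\<close> by (simp add: power2_eq_square algebra_simps)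
  moreover have "k\<^sup>2 * (p' - p\<^sup>2) \<le> k\<^sup>2 * (16 / n)"
    using \<open>p' - p\<^sup>2 \<le> 16 / n\<close> by (rule mult_left_mono) simp
  moreover have "k * p \<le> k" using p \<open>k \<ge> 0\<close> by (simp add: mult_left_le)
  moreover have "k\<^sup>2 * (16 / n) = 16 * k\<^sup>2 / n" by simp
  ultimately show ?thesis unfolding right_diff_distrib[of "k\<^sup>2"] by linarith
qed

text \<open>Pointwise form of Chebyshev's inequality: either x \<ge> \<mu> / 2, or the deviation term is
  at least 1.\<close>
lemma inverse_sqrt_le_deviation:
  fixes x \<mu> :: real
  assumes "0 \<le> x" "0 < \<mu>"
  shows "1 / sqrt (x + 1) \<le> sqrt 2 / sqrt \<mu> + 4 * (x - \<mu>)\<^sup>2 / \<mu>\<^sup>2"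
proof (cases "x \<ge> \<mu> / 2")
  case True
  then have "1 / sqrt (x + 1) \<le> 1 / sqrt (\<mu> / 2)"
    using assms by (intro divide_left_mono real_sqrt_le_mono) auto
  also have "\<dots> = sqrt 2 / sqrt \<mu>"
    by (simp add: real_sqrt_divide)
  moreover have "0 \<le> 4 * (x - \<mu>)\<^sup>2 / \<mu>\<^sup>2" by simp
  ultimately show ?thesis by linarith
next
  case False
  then have "(\<mu> / 2)\<^sup>2 \<le> (\<mu> - x)\<^sup>2"
    using assms by (intro power_mono) auto
  then have "(\<mu> / 2)\<^sup>2 \<le> (x - \<mu>)\<^sup>2"
    by (simp add: power2_commute)
  then have "1 \<le> 4 * (x - \<mu>)\<^sup>2 / \<mu>\<^sup>2"
    using assms by (simp add: field_simps power2_eq_square)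
  moreover have "1 / sqrt (x + 1) \<le> 1"
    using assms by (simp add: divide_le_eq_1)
  moreover have "0 \<le> sqrt 2 / sqrt \<mu>" using assms by simp
  ultimately show ?thesis by linarith
qed

lemma binomial_pair_split_ratio_ge:
  fixes lam :: real
  assumes "0 < lam" "2 \<le> n" "lam * n \<le> m" "m \<le> (1 - lam) * n"
  shows "lam\<^sup>2 \<le> real ((n - 2) choose (m - 1)) / real (n choose m)"
proof -
  have "lam * n > 0" using assms by simp
  then have "real m > 0" "real m < real n"
    using assms(3,4) by (auto simp: left_diff_distrib)
  then have "1 \<le> m" "m < n" by simp_all
  have "real n * (real n - 1) > 0" using assms(2) by simp
  have "lam\<^sup>2 * (real n * (real n - 1)) \<le> lam\<^sup>2 * (real n * real n)"
    by (intro mult_left_mono) auto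
  also have "\<dots> = (lam * n) * (lam * n)" by (simp add: power2_eq_square)
  also have "\<dots> \<le> real m * (real n - real m)"
    using assms by (intro mult_mono) (auto simp: algebra_simps)
  also have "\<dots> = real ((n - 2) choose (m - 1)) / real (n choose m) * (real n * (real n - 1))"
    using real_binomial_pair_split_eq[OF \<open>1 \<le> m\<close> \<open>m < n\<close>] \<open>m < n\<close> by (simp add: field_simps)
  finally show ?thesis
    using \<open>real n * (real n - 1) > 0\<close> by (rule mult_right_le_imp_le)
qed

lemma concentration_bound_arith:
  fixes \<mu> c n k :: real
  assumes \<mu>: "c * n \<le> \<mu>" and "c > 0" "n \<ge> 1" "0 \<le> k" "k \<le> n"
  shows "3 * sqrt 2 / sqrt \<mu> + 12 * (k + 16 * k\<^sup>2 / n) / \<mu>\<^sup>2 \<le> (3 * sqrt 2 / sqrt c + 204 / c\<^sup>2) / sqrt n"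
proof -
  have "c * n > 0" using assms by simp
  have "3 * sqrt 2 / sqrt \<mu> \<le> 3 * sqrt 2 / sqrt (c * n)"
    using \<mu> \<open>c * n > 0\<close> by (intro divide_left_mono real_sqrt_le_mono mult_pos_pos) auto
  also have "\<dots> = 3 * sqrt 2 / sqrt c / sqrt n" by (simp add: real_sqrt_mult)
  finally have first: "3 * sqrt 2 / sqrt \<mu> \<le> 3 * sqrt 2 / sqrt c / sqrt n" .
  have "k\<^sup>2 / n \<le> n"
    using assms by (simp add: divide_simps power2_eq_square mult_mono)
  then have num: "12 * (k + 16 * k\<^sup>2 / n) \<le> 204 * n" using assms by simp
  have den: "(c * n)\<^sup>2 \<le> \<mu>\<^sup>2" using \<mu> \<open>c * n > 0\<close> by (intro power_mono) auto
  have "12 * (k + 16 * k\<^sup>2 / n) / \<mu>\<^sup>2 \<le> 204 * n / (c * n)\<^sup>2"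
    using \<open>c * n > 0\<close> assms by (intro frac_le[OF _ num _ den]) auto
  also have "\<dots> = 204 / c\<^sup>2 / n" using assms by (simp add: power2_eq_square field_simps)
  also have "\<dots> \<le> 204 / c\<^sup>2 / sqrt n"
    using assms real_sqrt_le_mono[of n "n\<^sup>2"] by (intro divide_left_mono) (auto simp: power2_eq_square)
  finally show ?thesis using first by (simp add: add_divide_distrib)
qed

section \<open>Cubes in a slice\<close>

definition slice_sets :: "nat \<Rightarrow> nat \<Rightarrow> nat set set" where
  "slice_sets n m = {S. S \<subseteq> {..<n} \<and> card S = m}"

lemma finite_slice_sets: "finite (slice_sets n m)"
  unfolding slice_sets_def by (rule finite_subset[of _ "Pow {..<n}"]) auto

lemma card_slice_sets: "card (slice_sets n m) = n choose m"
  unfolding slice_sets_def using n_subsets[of "{..<n}" m] by simp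

lemma card_slice_sets_in_out:
  assumes A: "A \<subseteq> {..<n}" and B: "B \<subseteq> {..<n}" and "A \<inter> B = {}" and "card A \<le> m"
  shows "card {S \<in> slice_sets n m. A \<subseteq> S \<and> S \<inter> B = {}} = (n - card A - card B) choose (m - card A)"
proof -
  define U where "U = {..<n} - A - B"
  have "finite A" "finite B" using A B finite_subset by auto
  have "{S \<in> slice_sets n m. A \<subseteq> S \<and> S \<inter> B = {}} = (\<lambda>R. R \<union> A) ` {R. R \<subseteq> U \<and> card R = m - card A}"
  proof (intro equalityI subsetI)
    fix S assume S: "S \<in> {S \<in> slice_sets n m. A \<subseteq> S \<and> S \<inter> B = {}}"
    then have "S - A \<subseteq> U" "card (S - A) = m - card A"
      using \<open>finite A\<close> unfolding slice_sets_def U_def by (auto simp: card_Diff_subset)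
    moreover have "S = (S - A) \<union> A" using S by blast
    ultimately show "S \<in> (\<lambda>R. R \<union> A) ` {R. R \<subseteq> U \<and> card R = m - card A}" by blast
  next
    fix S assume "S \<in> (\<lambda>R. R \<union> A) ` {R. R \<subseteq> U \<and> card R = m - card A}"
    then obtain R where R: "R \<subseteq> U" "card R = m - card A" and S: "S = R \<union> A" by blast
    have "finite R" using R(1) finite_subset unfolding U_def by blast
    then have "card S = m"
      unfolding S using R \<open>finite A\<close> \<open>card A \<le> m\<close> by (subst card_Un_disjoint) (auto simp: U_def)
    then show "S \<in> {S \<in> slice_sets n m. A \<subseteq> S \<and> S \<inter> B = {}}"
      using R(1) A \<open>A \<inter> B = {}\<close> unfolding S slice_sets_def U_def by blast
  qed
  moreover have "inj_on (\<lambda>R. R \<union> A) {R. R \<subseteq> U \<and> card R = m - card A}"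
    unfolding U_def by (rule inj_onI) blast
  moreover have "card U = n - card A - card B"
  proof -
    have "card ({..<n} - A) = n - card A" using A \<open>finite A\<close> by (simp add: card_Diff_subset)
    moreover have "B \<subseteq> {..<n} - A" using B \<open>A \<inter> B = {}\<close> by blast
    ultimately show ?thesis unfolding U_def using \<open>finite B\<close> by (simp add: card_Diff_subset)
  qed
  ultimately show ?thesis
    using n_subsets[of U "m - card A"] by (simp add: card_image U_def)
qed

lemma card_eq_sum_class_fractions:
  fixes cls :: "'a \<Rightarrow> 'a set"
  assumes "finite X" "F \<subseteq> X"
    and cls: "\<And>x. x \<in> X \<Longrightarrow> x \<in> cls x \<and> cls x \<subseteq> X"
    and cls_eq: "\<And>x y. x \<in> X \<Longrightarrow> y \<in> cls x \<Longrightarrow> cls y = cls x"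
  shows "real (card F) = (\<Sum>x\<in>X. real (card (F \<inter> cls x)) / real (card (cls x)))"
proof -
  have "finite F" using assms(1,2) by (rule finite_subset[rotated])
  have classes: "{x \<in> X. y \<in> cls x} = cls y" if "y \<in> X" for y
  proof (intro equalityI subsetI)
    fix x assume "x \<in> {x \<in> X. y \<in> cls x}"
    then have "cls y = cls x" using cls_eq by blast
    then show "x \<in> cls y" using cls \<open>x \<in> {x \<in> X. y \<in> cls x}\<close> by blast
  next
    fix x assume "x \<in> cls y"
    then have "x \<in> X" "cls x = cls y" using cls cls_eq that by blast+
    then show "x \<in> {x \<in> X. y \<in> cls x}" using cls that by auto
  qed
  have "(\<Sum>x\<in>X. real (card (F \<inter> cls x)) / real (card (cls x)))
      = (\<Sum>x\<in>X. \<Sum>y\<in>{y \<in> F. y \<in> cls x}. 1 / real (card (cls x)))"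
    by (simp add: Int_def conj_commute)
  also have "\<dots> = (\<Sum>y\<in>F. \<Sum>x\<in>{x \<in> X. y \<in> cls x}. 1 / real (card (cls x)))"
    using assms(1) \<open>finite F\<close> by (rule sum.swap_restrict)
  also have "\<dots> = (\<Sum>y\<in>F. 1)"
  proof (rule sum.cong[OF refl])
    fix y assume "y \<in> F"
    then have "y \<in> X" using assms(2) by blast
    have "(\<Sum>x\<in>cls y. 1 / real (card (cls x))) = (\<Sum>x\<in>cls y. 1 / real (card (cls y)))"
      by (intro sum.cong refl) (simp add: cls_eq[OF \<open>y \<in> X\<close>])
    also have "\<dots> = 1"
    proof -
      have "finite (cls y)" "y \<in> cls y"
        using cls[OF \<open>y \<in> X\<close>] assms(1) finite_subset by auto
      then show ?thesis by (auto simp: card_gt_0_iff)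
    qed
    finally show "(\<Sum>x\<in>{x \<in> X. y \<in> cls x}. 1 / real (card (cls x))) = 1"
      unfolding classes[OF \<open>y \<in> X\<close>] .
  qed
  finally show ?thesis by simp
qed

locale disjoint_pairs =
  fixes n k :: nat and u v :: "nat \<Rightarrow> nat"
  assumes inj_u: "inj_on u {..<k}" and inj_v: "inj_on v {..<k}"
    and disjoint_uv: "u ` {..<k} \<inter> v ` {..<k} = {}"
    and u_range: "u ` {..<k} \<subseteq> {..<n}" and v_range: "v ` {..<k} \<subseteq> {..<n}"
begin

definition split_pairs :: "nat set \<Rightarrow> nat set" where
  "split_pairs S = {i. i < k \<and> (u i \<in> S) \<noteq> (v i \<in> S)}"

definition cube_core :: "nat set \<Rightarrow> nat set" where
  "cube_core S = S - (u ` split_pairs S \<union> v ` split_pairs S)"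

definition cube_vertex :: "nat set \<Rightarrow> nat set \<Rightarrow> nat set" where
  "cube_vertex S T = cube_core S \<union> v ` T \<union> u ` (split_pairs S - T)"

definition cube :: "nat set \<Rightarrow> nat set set" where
  "cube S = cube_vertex S ` Pow (split_pairs S)"

lemma split_pairs_subset: "split_pairs S \<subseteq> {..<k}"
  unfolding split_pairs_def by auto

lemma finite_split_pairs: "finite (split_pairs S)"
  using split_pairs_subset finite_subset by blast

lemma u_neq_v: "i < k \<Longrightarrow> j < k \<Longrightarrow> u i \<noteq> v j"
  using disjoint_uv by auto

lemma u_eq_iff: "i < k \<Longrightarrow> j < k \<Longrightarrow> u i = u j \<longleftrightarrow> i = j"
  using inj_u by (meson inj_on_contraD lessThan_iff)

lemma v_eq_iff: "i < k \<Longrightarrow> j < k \<Longrightarrow> v i = v j \<longleftrightarrow> i = j"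
  using inj_v by (meson inj_on_contraD lessThan_iff)

lemma u_mem_cube_vertex:
  assumes "T \<subseteq> split_pairs S" "i < k"
  shows "u i \<in> cube_vertex S T \<longleftrightarrow> (if i \<in> split_pairs S then i \<notin> T else u i \<in> S)"
  using assms split_pairs_subset unfolding cube_vertex_def cube_core_def
  by (auto simp: u_eq_iff u_neq_v u_neq_v[symmetric] subset_iff)

lemma v_mem_cube_vertex:
  assumes "T \<subseteq> split_pairs S" "i < k"
  shows "v i \<in> cube_vertex S T \<longleftrightarrow> (if i \<in> split_pairs S then i \<in> T else v i \<in> S)"
  using assms split_pairs_subset unfolding cube_vertex_def cube_core_def
  by (auto simp: v_eq_iff u_neq_v u_neq_v[symmetric] subset_iff)

lemma split_pairs_cube_vertex: "T \<subseteq> split_pairs S \<Longrightarrow> split_pairs (cube_vertex S T) = split_pairs S"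
  using u_mem_cube_vertex v_mem_cube_vertex unfolding split_pairs_def[of "cube_vertex S T"]
  by (auto simp: split_pairs_def split: if_splits)

lemma cube_core_cube_vertex: "T \<subseteq> split_pairs S \<Longrightarrow> cube_core (cube_vertex S T) = cube_core S"
  using split_pairs_cube_vertex[of T S] unfolding cube_core_def
  by (simp add: cube_vertex_def cube_core_def) blast

lemma cube_vertex_cube_vertex:
  assumes "T \<subseteq> split_pairs S"
  shows "cube_vertex (cube_vertex S T) T' = cube_vertex S T'"
  unfolding cube_vertex_def[of "cube_vertex S T"] cube_core_cube_vertex[OF assms]
    split_pairs_cube_vertex[OF assms]
  by (simp only: cube_vertex_def)

lemma cube_vertex_self: "cube_vertex S {i \<in> split_pairs S. v i \<in> S} = S"
proof (intro equalityI subsetI)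
  fix x assume "x \<in> cube_vertex S {i \<in> split_pairs S. v i \<in> S}"
  then show "x \<in> S" unfolding cube_vertex_def cube_core_def split_pairs_def by blast
next
  fix x assume "x \<in> S"
  consider i where "i \<in> split_pairs S" "x = u i" | i where "i \<in> split_pairs S" "x = v i"
    | "x \<in> cube_core S"
    using \<open>x \<in> S\<close> unfolding cube_core_def by blast
  then show "x \<in> cube_vertex S {i \<in> split_pairs S. v i \<in> S}"
  proof cases
    case (1 i)
    then have "v i \<notin> S" using \<open>x \<in> S\<close> unfolding split_pairs_def by blast
    then show ?thesis using 1 unfolding cube_vertex_def by blast
  next
    case (2 i)
    then show ?thesis using \<open>x \<in> S\<close> unfolding cube_vertex_def by blast
  qed (simp add: cube_vertex_def)
qed

lemma self_in_cube: "S \<in> cube S"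
  unfolding cube_def by (rule image_eqI[where f = "cube_vertex S", OF cube_vertex_self[symmetric]]) blast

lemma cube_eq_if_mem:
  assumes "S' \<in> cube S"
  shows "cube S' = cube S"
proof -
  obtain T where "T \<subseteq> split_pairs S" "S' = cube_vertex S T"
    using assms unfolding cube_def by blast
  then show ?thesis
    unfolding cube_def by (simp add: split_pairs_cube_vertex cube_vertex_cube_vertex)
qed

lemma inj_on_cube_vertex: "inj_on (cube_vertex S) (Pow (split_pairs S))"
proof (rule inj_onI)
  fix T1 T2 assume T: "T1 \<in> Pow (split_pairs S)" "T2 \<in> Pow (split_pairs S)"
    and eq: "cube_vertex S T1 = cube_vertex S T2"
  have "i \<in> T1 \<longleftrightarrow> i \<in> T2" for i
  proof (cases "i \<in> split_pairs S")
    case True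
    then have "i < k" using split_pairs_subset by blast
    then show ?thesis using v_mem_cube_vertex[of T1 S i] v_mem_cube_vertex[of T2 S i] T eq True by auto
  next
    case False
    then show ?thesis using T by blast
  qed
  then show "T1 = T2" by blast
qed

lemma card_cube: "card (cube S) = 2 ^ card (split_pairs S)"
  unfolding cube_def by (simp add: card_image[OF inj_on_cube_vertex] card_Pow finite_split_pairs)

lemma sum_cube_vertex:
  fixes a :: "nat \<Rightarrow> 'a::ab_group_add"
  assumes T: "T \<subseteq> split_pairs S" and "finite S"
  shows "sum a (cube_vertex S T)
    = sum a (cube_core S) + (\<Sum>i\<in>split_pairs S. a (u i)) + (\<Sum>i\<in>T. a (v i) - a (u i))"
proof -
  have Tk: "T \<subseteq> {..<k}" using T split_pairs_subset by blast
  have "finite T" using T finite_split_pairs finite_subset by blast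
  have "inj_on v T" using inj_on_subset[OF inj_v Tk] .
  have "split_pairs S - T \<subseteq> {..<k}" using split_pairs_subset by blast
  then have "inj_on u (split_pairs S - T)" by (rule inj_on_subset[OF inj_u])
  have "v ` T \<inter> u ` (split_pairs S - T) = {}"
    using disjoint_uv image_mono[OF Tk, of v] image_mono[OF \<open>split_pairs S - T \<subseteq> {..<k}\<close>, of u]
    by blast
  then have "sum a (v ` T \<union> u ` (split_pairs S - T)) = sum a (v ` T) + sum a (u ` (split_pairs S - T))"
    using \<open>finite T\<close> finite_split_pairs by (intro sum.union_disjoint) auto
  also have "\<dots> = (\<Sum>i\<in>T. a (v i)) + (\<Sum>i\<in>split_pairs S - T. a (u i))"
    using \<open>inj_on v T\<close> \<open>inj_on u (split_pairs S - T)\<close> by (simp add: sum.reindex)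
  also have "(\<Sum>i\<in>split_pairs S - T. a (u i)) = (\<Sum>i\<in>split_pairs S. a (u i)) - (\<Sum>i\<in>T. a (u i))"
    using T finite_split_pairs by (simp add: sum_diff)
  finally have rest: "sum a (v ` T \<union> u ` (split_pairs S - T))
      = (\<Sum>i\<in>split_pairs S. a (u i)) + (\<Sum>i\<in>T. a (v i) - a (u i))"
    by (simp add: sum_subtractf algebra_simps)
  have "cube_core S \<inter> (v ` T \<union> u ` (split_pairs S - T)) = {}"
    unfolding cube_core_def using T by blast
  moreover have "finite (cube_core S)" unfolding cube_core_def using \<open>finite S\<close> by simp
  ultimately have "sum a (cube_vertex S T) = sum a (cube_core S) + sum a (v ` T \<union> u ` (split_pairs S - T))"
    unfolding cube_vertex_def Un_assoc using \<open>finite T\<close> finite_split_pairs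
    by (intro sum.union_disjoint) auto
  then show ?thesis using rest by (simp add: add.assoc)
qed

lemma card_cube_vertex:
  assumes "T \<subseteq> split_pairs S" "finite S"
  shows "card (cube_vertex S T) = card S"
proof -
  have "real (card (cube_vertex S T)) = real (card (cube_core S)) + real (card (split_pairs S))"
    using sum_cube_vertex[OF assms, of "\<lambda>_. 1 :: real"] by simp
  moreover have "real (card S) = real (card (cube_core S)) + real (card (split_pairs S))"
    using sum_cube_vertex[of "{i \<in> split_pairs S. v i \<in> S}" S "\<lambda>_. 1 :: real"] assms(2)
    by (simp add: cube_vertex_self)
  ultimately show ?thesis by linarith
qed

lemma cube_subset_slice_sets:
  assumes "S \<in> slice_sets n m"
  shows "cube S \<subseteq> slice_sets n m"
proof
  fix S' assume "S' \<in> cube S"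
  then obtain T where T: "T \<subseteq> split_pairs S" and S': "S' = cube_vertex S T"
    unfolding cube_def by blast
  have "S \<subseteq> {..<n}" "card S = m" using assms unfolding slice_sets_def by auto
  moreover have "v ` T \<subseteq> {..<n}" "u ` (split_pairs S - T) \<subseteq> {..<n}"
    using T split_pairs_subset u_range v_range by blast+
  ultimately have "S' \<subseteq> {..<n}" unfolding S' cube_vertex_def cube_core_def by blast
  moreover have "finite S" using finite_subset[OF \<open>S \<subseteq> {..<n}\<close>] by simp
  then have "card S' = m" unfolding S' using card_cube_vertex[OF T] \<open>card S = m\<close> by simp
  ultimately show "S' \<in> slice_sets n m" unfolding slice_sets_def by blast
qed

lemma card_near_le_sum_cubes:
  fixes a :: "nat \<Rightarrow> real"
  assumes sep: "\<forall>i<k. \<bar>a (v i) - a (u i)\<bar> \<ge> r" and "r > 0"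
  shows "real (card {S \<in> slice_sets n m. \<bar>sum a S - z\<bar> \<le> r})
    \<le> (\<Sum>S\<in>slice_sets n m.
          3 * real (card (split_pairs S) choose (card (split_pairs S) div 2)) / 2 ^ card (split_pairs S))"
proof -
  define F where "F = {S \<in> slice_sets n m. \<bar>sum a S - z\<bar> \<le> r}"
  have "real (card F) = (\<Sum>S\<in>slice_sets n m. real (card (F \<inter> cube S)) / real (card (cube S)))"
    by (rule card_eq_sum_class_fractions)
      (auto simp: F_def finite_slice_sets self_in_cube cube_subset_slice_sets cube_eq_if_mem)
  also have "\<dots> \<le> (\<Sum>S\<in>slice_sets n m.
      3 * real (card (split_pairs S) choose (card (split_pairs S) div 2)) / 2 ^ card (split_pairs S))"
  proof (rule sum_mono)
    fix S assume "S \<in> slice_sets n m"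
    then have "finite S" unfolding slice_sets_def using finite_subset by blast
    define Q where "Q = split_pairs S"
    define c where "c = sum a (cube_core S) + (\<Sum>i\<in>Q. a (u i))"
    define d where "d i = a (v i) - a (u i)" for i
    define G where "G = {T. T \<subseteq> Q \<and> \<bar>sum d T - (z - c)\<bar> \<le> r}"
    have "F \<inter> cube S \<subseteq> cube_vertex S ` G"
    proof
      fix S' assume "S' \<in> F \<inter> cube S"
      then obtain T where T: "T \<subseteq> Q" "S' = cube_vertex S T" and "S' \<in> F"
        unfolding cube_def Q_def by blast
      have "sum a S' = c + sum d T"
        unfolding T(2) c_def d_def Q_def using sum_cube_vertex[OF T(1)[unfolded Q_def] \<open>finite S\<close>] .
      then have "T \<in> G"
        using T(1) \<open>S' \<in> F\<close> unfolding F_def G_def by (simp add: algebra_simps)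
      then show "S' \<in> cube_vertex S ` G"
        using T(2) by blast
    qed
    moreover have "finite G"
      using finite_split_pairs unfolding G_def Q_def by simp
    ultimately have "card (F \<inter> cube S) \<le> card (cube_vertex S ` G)"
      by (intro card_mono finite_imageI)
    also have "\<dots> \<le> card G"
      using \<open>finite G\<close> by (rule card_image_le)
    also have "\<dots> \<le> 3 * (card Q choose (card Q div 2))"
      using sep split_pairs_subset \<open>r > 0\<close> unfolding G_def Q_def d_def
      by (intro littlewood_offord_count finite_split_pairs) auto
    finally show "real (card (F \<inter> cube S)) / real (card (cube S))
        \<le> 3 * real (card Q choose (card Q div 2)) / 2 ^ card Q"
      unfolding card_cube Q_def by (simp add: divide_right_mono)
  qed
  finally show ?thesis unfolding F_def .
qed

text \<open>A lower bound for card (split_pairs S) whose first two moments over the slice can be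
  counted.\<close>
definition out_pairs :: "nat set \<Rightarrow> nat" where
  "out_pairs S = card {i. i < k \<and> u i \<in> S \<and> v i \<notin> S}"

lemma out_pairs_le: "out_pairs S \<le> card (split_pairs S)"
  unfolding out_pairs_def split_pairs_def by (rule card_mono) auto

lemma out_pairs_eq_sum: "real (out_pairs S) = (\<Sum>i<k. of_bool (u i \<in> S \<and> v i \<notin> S))"
  unfolding out_pairs_def by (simp add: Int_def)

lemma card_slice_sets_pairs_out:
  assumes "J \<subseteq> {..<k}" "card J \<le> m"
  shows "card {S \<in> slice_sets n m. \<forall>i\<in>J. u i \<in> S \<and> v i \<notin> S} = (n - 2 * card J) choose (m - card J)"
proof -
  have "{S \<in> slice_sets n m. \<forall>i\<in>J. u i \<in> S \<and> v i \<notin> S}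
      = {S \<in> slice_sets n m. u ` J \<subseteq> S \<and> S \<inter> v ` J = {}}" by blast
  moreover have "card (u ` J) = card J" "card (v ` J) = card J"
    using assms(1) inj_on_subset[OF inj_u] inj_on_subset[OF inj_v] by (auto simp: card_image)
  moreover have "u ` J \<subseteq> {..<n}" "v ` J \<subseteq> {..<n}" "u ` J \<inter> v ` J = {}"
    using assms(1) u_range v_range disjoint_uv by blast+
  ultimately show ?thesis
    using assms(2) card_slice_sets_in_out[of "u ` J" n "v ` J" m] by (simp add: mult_2 diff_diff_add)
qed

lemma sum_out_pairs:
  assumes "1 \<le> m"
  shows "(\<Sum>S\<in>slice_sets n m. real (out_pairs S)) = real k * real ((n - 2) choose (m - 1))"
proof -
  have "(\<Sum>S\<in>slice_sets n m. real (out_pairs S))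
      = (\<Sum>i<k. real (card {S \<in> slice_sets n m. \<forall>j\<in>{i}. u j \<in> S \<and> v j \<notin> S}))"
    unfolding out_pairs_eq_sum by (subst sum.swap) (simp add: finite_slice_sets Int_def)
  also have "\<dots> = (\<Sum>i<k. real ((n - 2) choose (m - 1)))"
    using assms by (intro sum.cong refl) (subst card_slice_sets_pairs_out; simp)
  finally show ?thesis by simp
qed

lemma sum_out_pairs_sq:
  assumes "2 \<le> m"
  shows "(\<Sum>S\<in>slice_sets n m. (real (out_pairs S))\<^sup>2)
    = real k * real ((n - 2) choose (m - 1)) + real k * (real k - 1) * real ((n - 4) choose (m - 2))"
proof -
  define P where "P i S \<longleftrightarrow> u i \<in> S \<and> v i \<notin> S" for i S
  have "(\<Sum>S\<in>slice_sets n m. (real (out_pairs S))\<^sup>2)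
      = (\<Sum>S\<in>slice_sets n m. \<Sum>i<k. \<Sum>j<k. of_bool (\<forall>l\<in>{i, j}. P l S))"
    unfolding out_pairs_eq_sum power2_eq_square sum_product P_def
    by (intro sum.cong refl) simp
  also have "\<dots> = (\<Sum>i<k. \<Sum>j<k. real (card {S \<in> slice_sets n m. \<forall>l\<in>{i, j}. P l S}))"
    by (subst sum.swap, subst sum.swap) (simp add: finite_slice_sets Int_def)
  also have "\<dots> = (\<Sum>i<k. \<Sum>j<k. if j = i then real ((n - 2) choose (m - 1))
      else real ((n - 4) choose (m - 2)))"
    using assms unfolding P_def
    by (intro sum.cong refl) (subst card_slice_sets_pairs_out; simp add: card_insert_if; simp add: numeral_2_eq_2)
  also have "\<dots> = (\<Sum>i<k. real ((n - 2) choose (m - 1)) + (real k - 1) * real ((n - 4) choose (m - 2)))"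
  proof (intro sum.cong refl)
    fix i assume "i \<in> {..<k}"
    let ?A = "real ((n - 2) choose (m - 1))" and ?B = "real ((n - 4) choose (m - 2))"
    have "(\<Sum>j<k. if j = i then ?A else ?B) = (\<Sum>j<k. ?B + (if j = i then ?A - ?B else 0))"
      by (intro sum.cong) auto
    also have "\<dots> = real k * ?B + (?A - ?B)"
      using \<open>i \<in> {..<k}\<close> by (simp add: sum.distrib)
    finally show "(\<Sum>j<k. if j = i then ?A else ?B) = ?A + (real k - 1) * ?B"
      by (simp add: algebra_simps)
  qed
  finally show ?thesis by (simp add: algebra_simps)
qed

lemma sum_sq_deviation_out_pairs_le:
  assumes m: "2 \<le> m" "m + 2 \<le> n" and n: "6 \<le> n"
  defines "\<mu> \<equiv> real k * real ((n - 2) choose (m - 1)) / real (n choose m)"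
  shows "(\<Sum>S\<in>slice_sets n m. (real (out_pairs S) - \<mu>)\<^sup>2)
    \<le> real (n choose m) * (real k + 16 * (real k)\<^sup>2 / real n)"
proof -
  define N where "N = real (n choose m)"
  define p where "p = real ((n - 2) choose (m - 1)) / N"
  define p' where "p' = real ((n - 4) choose (m - 2)) / N"
  have "N > 0" "1 \<le> m" unfolding N_def using m by simp_all
  have "0 \<le> p" "0 \<le> p'" unfolding p_def p'_def N_def by simp_all
  have variance: "real k * p + real k * (real k - 1) * p' - (real k)\<^sup>2 * p\<^sup>2
      \<le> real k + 16 * (real k)\<^sup>2 / real n"
    using pair_variance_arith[OF \<open>0 \<le> p\<close> _ \<open>0 \<le> p'\<close>] binomial_pair_split_ratios[OF m] n
    unfolding p_def p'_def N_def by simp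
  have "\<mu> = real k * p" unfolding \<mu>_def p_def N_def by simp
  have "(\<Sum>S\<in>slice_sets n m. (real (out_pairs S) - \<mu>)\<^sup>2)
      = (\<Sum>S\<in>slice_sets n m. (real (out_pairs S))\<^sup>2) - 2 * \<mu> * (\<Sum>S\<in>slice_sets n m. real (out_pairs S))
        + N * \<mu>\<^sup>2"
    by (simp add: power2_diff sum.distrib sum_subtractf sum_distrib_left card_slice_sets N_def
        algebra_simps)
  also have "\<dots> = N * (real k * p + real k * (real k - 1) * p' - (real k)\<^sup>2 * p\<^sup>2)"
    using m \<open>N > 0\<close> unfolding sum_out_pairs_sq[OF m(1)] sum_out_pairs[OF \<open>1 \<le> m\<close>] \<open>\<mu> = real k * p\<close>
    by (simp add: p_def p'_def field_simps power2_eq_square)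
  also have "\<dots> \<le> N * (real k + 16 * (real k)\<^sup>2 / real n)"
    using variance \<open>N > 0\<close> by simp
  finally show ?thesis unfolding N_def .
qed

lemma card_near_le:
  fixes a :: "nat \<Rightarrow> real"
  assumes sep: "\<forall>i<k. \<bar>a (v i) - a (u i)\<bar> \<ge> r" and "r > 0"
    and m: "2 \<le> m" "m + 2 \<le> n" and n: "6 \<le> n"
  defines "\<mu> \<equiv> real k * real ((n - 2) choose (m - 1)) / real (n choose m)"
  assumes "\<mu> > 0"
  shows "real (card {S \<in> slice_sets n m. \<bar>sum a S - z\<bar> \<le> r})
    \<le> real (n choose m) * (3 * sqrt 2 / sqrt \<mu> + 12 * (real k + 16 * (real k)\<^sup>2 / real n) / \<mu>\<^sup>2)"
proof -
  let ?N = "real (n choose m)"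
  have "real (card {S \<in> slice_sets n m. \<bar>sum a S - z\<bar> \<le> r})
      \<le> (\<Sum>S\<in>slice_sets n m.
          3 * real (card (split_pairs S) choose (card (split_pairs S) div 2)) / 2 ^ card (split_pairs S))"
    by (rule card_near_le_sum_cubes[OF sep \<open>r > 0\<close>])
  also have "\<dots> \<le> (\<Sum>S\<in>slice_sets n m. 3 * sqrt 2 / sqrt \<mu> + 12 * (real (out_pairs S) - \<mu>)\<^sup>2 / \<mu>\<^sup>2)"
  proof (rule sum_mono)
    fix S
    let ?q = "card (split_pairs S)"
    have "3 * real (?q choose (?q div 2)) / 2 ^ ?q \<le> 3 * (1 / sqrt (?q + 1))"
      using central_binomial_le[of ?q] by simp
    also have "\<dots> \<le> 3 * (1 / sqrt (real (out_pairs S) + 1))"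
      using out_pairs_le[of S] by (simp add: divide_simps)
    also have "\<dots> \<le> 3 * (sqrt 2 / sqrt \<mu> + 4 * (real (out_pairs S) - \<mu>)\<^sup>2 / \<mu>\<^sup>2)"
      using \<open>\<mu> > 0\<close> by (intro mult_left_mono inverse_sqrt_le_deviation) simp_all
    finally show "3 * real (?q choose (?q div 2)) / 2 ^ ?q
        \<le> 3 * sqrt 2 / sqrt \<mu> + 12 * (real (out_pairs S) - \<mu>)\<^sup>2 / \<mu>\<^sup>2"
      by simp
  qed
  also have "\<dots> = ?N * (3 * sqrt 2 / sqrt \<mu>)
      + 12 / \<mu>\<^sup>2 * (\<Sum>S\<in>slice_sets n m. (real (out_pairs S) - \<mu>)\<^sup>2)"
    by (simp add: sum.distrib sum_distrib_left card_slice_sets)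
  also have "\<dots> \<le> ?N * (3 * sqrt 2 / sqrt \<mu>) + 12 / \<mu>\<^sup>2 * (?N * (real k + 16 * (real k)\<^sup>2 / real n))"
    using sum_sq_deviation_out_pairs_le[OF m n] unfolding \<mu>_def by (intro add_left_mono mult_left_mono) auto
  also have "\<dots> = ?N * (3 * sqrt 2 / sqrt \<mu> + 12 * (real k + 16 * (real k)\<^sup>2 / real n) / \<mu>\<^sup>2)"
    by (simp add: algebra_simps add_divide_distrib)
  finally show ?thesis .
qed

end

section \<open>Concentration on the slice\<close>

lemma disjoint_pairs_from_sets:
  assumes "I1 \<subseteq> {..<n}" "I2 \<subseteq> {..<n}" "I1 \<inter> I2 = {}" "k \<le> card I1" "k \<le> card I2"
  obtains u v where "disjoint_pairs n k u v" "u ` {..<k} \<subseteq> I1" "v ` {..<k} \<subseteq> I2"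
proof -
  have "finite I1" "finite I2" using assms(1,2) finite_subset by auto
  then obtain u v where u: "u ` {..<k} \<subseteq> I1" "inj_on u {..<k}"
    and v: "v ` {..<k} \<subseteq> I2" "inj_on v {..<k}"
    using card_le_inj[of "{..<k}" I1] card_le_inj[of "{..<k}" I2] assms(4,5) by auto
  have "disjoint_pairs n k u v"
    using u v assms(1-3) by unfold_locales blast+
  then show thesis using that u(1) v(1) by blast
qed

lemma inj_indicator: "inj (indicator :: 'a set \<Rightarrow> 'a \<Rightarrow> real)"
  by (rule injI) (metis indicator_eq_1_iff set_eqI)

lemma slice01_eq_indicator_image: "slice01 n m = indicator ` slice_sets n m"
proof (intro equalityI subsetI)
  fix b assume b: "b \<in> slice01 n m"
  define S where "S = {i. i < n \<and> b i = 1}"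
  have "b = indicator S"
  proof
    fix i show "b i = indicator S i"
      using b unfolding slice01_def S_def by (cases "i < n") auto
  qed
  moreover have "card S = m"
  proof -
    have "S \<subseteq> {..<n}" unfolding S_def by auto
    then have "real (card S) = (\<Sum>i<n. indicator S i)"
      by (simp add: indicator_def Int_absorb1 Int_absorb2)
    then show ?thesis using b \<open>b = indicator S\<close> unfolding slice01_def by simp
  qed
  ultimately show "b \<in> indicator ` slice_sets n m"
    unfolding slice_sets_def S_def by auto
next
  fix b :: "nat \<Rightarrow> real" assume "b \<in> indicator ` slice_sets n m"
  then obtain S where "S \<subseteq> {..<n}" "card S = m" "b = indicator S"
    unfolding slice_sets_def by blast
  then show "b \<in> slice01 n m"
    unfolding slice01_def by (auto simp: indicator_def Int_absorb1)
qed

definition slice_sum_pmf :: "nat \<Rightarrow> nat \<Rightarrow> (nat \<Rightarrow> real) \<Rightarrow> real pmf" where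
  "slice_sum_pmf n m a = map_pmf (\<lambda>b. \<Sum>i<n. a i * b i) (pmf_of_set (slice01 n m))"

lemma prob_slice_sum:
  fixes a :: "nat \<Rightarrow> real"
  assumes "m \<le> n"
  shows "measure_pmf.prob (slice_sum_pmf n m a) A
    = real (card {S \<in> slice_sets n m. sum a S \<in> A}) / real (n choose m)"
proof -
  have card_indicator: "card ((indicator :: nat set \<Rightarrow> nat \<Rightarrow> real) ` X) = card X" for X
    by (rule card_image[OF inj_on_subset[OF inj_indicator subset_UNIV]])
  have "{..<m} \<in> slice_sets n m" using assms unfolding slice_sets_def by auto
  then have "slice01 n m \<noteq> {}" "finite (slice01 n m)"
    unfolding slice01_eq_indicator_image by (auto simp: finite_slice_sets)
  moreover have "card (slice01 n m) = n choose m"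
    unfolding slice01_eq_indicator_image card_indicator card_slice_sets ..
  moreover have "slice01 n m \<inter> (\<lambda>b. \<Sum>i<n. a i * b i) -` A
      = indicator ` {S \<in> slice_sets n m. sum a S \<in> A}"
  proof -
    have "(\<Sum>i<n. a i * indicator S i) = sum a S" if "S \<in> slice_sets n m" for S
      using that unfolding slice_sets_def by (simp add: indicator_def Int_absorb1)
    then show ?thesis unfolding slice01_eq_indicator_image by auto
  qed
  ultimately show ?thesis by (simp add: slice_sum_pmf_def measure_pmf_of_set card_indicator)
qed

lemma prob_near_le_large_n:
  fixes \<sigma> lam r :: real and a :: "nat \<Rightarrow> real"
  assumes "0 < \<sigma>" "0 < lam" and n: "6 + 2 / lam \<le> real n" and "r > 0"
    and I: "I1 \<subseteq> {..<n}" "I2 \<subseteq> {..<n}" "I1 \<inter> I2 = {}"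
    and card_I: "\<sigma> * real n \<le> real (card I1)" "\<sigma> * real n \<le> real (card I2)"
    and sep: "\<forall>i\<in>I1. \<forall>j\<in>I2. r \<le> \<bar>a i - a j\<bar>"
    and m: "lam * real n \<le> real m" "real m \<le> (1 - lam) * real n"
  shows "measure_pmf.prob (slice_sum_pmf n m a) {x. \<bar>x - z\<bar> \<le> r}
    \<le> (3 * sqrt 2 / sqrt (\<sigma> * lam\<^sup>2) + 204 / (\<sigma> * lam\<^sup>2)\<^sup>2) / sqrt n"
proof -
  have "2 / lam \<ge> 0" "lam * real n \<ge> 2"
    using n \<open>0 < lam\<close> by (auto simp: field_simps)
  moreover have "(1 - lam) * real n = real n - lam * real n" by (simp add: left_diff_distrib)
  ultimately have "6 \<le> real n" "2 \<le> real m" "real m + 2 \<le> real n"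
    using n m by linarith+
  then have "6 \<le> n" "2 \<le> m" "m + 2 \<le> n" by linarith+
  define k where "k = min (card I1) (card I2)"
  obtain u v where "disjoint_pairs n k u v" and uv: "u ` {..<k} \<subseteq> I1" "v ` {..<k} \<subseteq> I2"
    using disjoint_pairs_from_sets[OF I, of k] unfolding k_def by auto
  interpret disjoint_pairs n k u v by fact
  have sep': "\<forall>i<k. r \<le> \<bar>a (v i) - a (u i)\<bar>"
    using sep uv by (fastforce simp: abs_minus_commute)
  define \<mu> where "\<mu> = real k * real ((n - 2) choose (m - 1)) / real (n choose m)"
  have "(\<sigma> * real n) * lam\<^sup>2 \<le> \<mu>"
    unfolding \<mu>_def times_divide_eq_right[symmetric]
    using card_I binomial_pair_split_ratio_ge[of lam n m] \<open>0 < lam\<close> \<open>6 \<le> n\<close> m \<open>0 < \<sigma>\<close>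
    by (intro mult_mono) (auto simp: k_def)
  then have \<mu>: "(\<sigma> * lam\<^sup>2) * real n \<le> \<mu>" by (simp add: algebra_simps)
  moreover have "0 < (\<sigma> * lam\<^sup>2) * real n" using \<open>0 < \<sigma>\<close> \<open>0 < lam\<close> \<open>6 \<le> n\<close> by simp
  ultimately have "\<mu> > 0" by linarith
  have "k \<le> n" using I(1) unfolding k_def by (metis card_lessThan card_mono finite_lessThan min.coboundedI1)
  have "m \<le> n" using \<open>m + 2 \<le> n\<close> by simp
  have "measure_pmf.prob (slice_sum_pmf n m a) {x. \<bar>x - z\<bar> \<le> r}
      = real (card {S \<in> slice_sets n m. \<bar>sum a S - z\<bar> \<le> r}) / real (n choose m)"
    unfolding prob_slice_sum[OF \<open>m \<le> n\<close>] mem_Collect_eq ..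
  also have "\<dots> \<le> 3 * sqrt 2 / sqrt \<mu> + 12 * (real k + 16 * (real k)\<^sup>2 / real n) / \<mu>\<^sup>2"
    using card_near_le[OF sep' \<open>r > 0\<close> \<open>2 \<le> m\<close> \<open>m + 2 \<le> n\<close> \<open>6 \<le> n\<close>, of z] \<open>\<mu> > 0\<close> \<open>m \<le> n\<close>
    unfolding \<mu>_def by (simp add: divide_le_eq mult.commute)
  also have "\<dots> \<le> (3 * sqrt 2 / sqrt (\<sigma> * lam\<^sup>2) + 204 / (\<sigma> * lam\<^sup>2)\<^sup>2) / sqrt n"
    using \<mu> \<open>0 < \<sigma>\<close> \<open>0 < lam\<close> \<open>6 \<le> n\<close> \<open>k \<le> n\<close> by (intro concentration_bound_arith) auto
  finally show ?thesis .
qed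

definition levy_const :: "real \<Rightarrow> real \<Rightarrow> real" where
  "levy_const \<sigma> lam = 3 * sqrt 2 / sqrt (\<sigma> * lam\<^sup>2) + 204 / (\<sigma> * lam\<^sup>2)\<^sup>2 + sqrt (6 + 2 / lam)"

lemma prob_near_le:
  fixes \<sigma> lam r :: real and a :: "nat \<Rightarrow> real"
  assumes "0 < \<sigma>" "0 < lam" "1 \<le> n" "r > 0"
    and "I1 \<subseteq> {..<n}" "I2 \<subseteq> {..<n}" "I1 \<inter> I2 = {}"
    and "\<sigma> * real n \<le> real (card I1)" "\<sigma> * real n \<le> real (card I2)"
    and "\<forall>i\<in>I1. \<forall>j\<in>I2. r \<le> \<bar>a i - a j\<bar>"
    and "lam * real n \<le> real m" "real m \<le> (1 - lam) * real n"
  shows "measure_pmf.prob (slice_sum_pmf n m a) {x. \<bar>x - z\<bar> \<le> r}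
    \<le> levy_const \<sigma> lam / sqrt n"
proof (cases "real n < 6 + 2 / lam")
  case True
  have "measure_pmf.prob (slice_sum_pmf n m a) {x. \<bar>x - z\<bar> \<le> r} \<le> 1"
    by (rule measure_pmf.prob_le_1)
  also have "1 \<le> sqrt (6 + 2 / lam) / sqrt n" using True assms(3) by simp
  also have "\<dots> \<le> levy_const \<sigma> lam / sqrt n"
    unfolding levy_const_def using assms(1,2) by (intro divide_right_mono) auto
  finally show ?thesis .
next
  case False
  then have "measure_pmf.prob (slice_sum_pmf n m a) {x. \<bar>x - z\<bar> \<le> r}
      \<le> (3 * sqrt 2 / sqrt (\<sigma> * lam\<^sup>2) + 204 / (\<sigma> * lam\<^sup>2)\<^sup>2) / sqrt n"
    using assms by (intro prob_near_le_large_n) auto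
  also have "\<dots> \<le> levy_const \<sigma> lam / sqrt n"
    unfolding levy_const_def using assms(2) by (intro divide_right_mono) auto
  finally show ?thesis .
qed

lemma levy_conc_le:
  assumes "\<And>z. measure_pmf.prob p {x. \<bar>x - z\<bar> \<le> r} \<le> B"
  shows "levy_conc p r \<le> B"
  unfolding levy_conc_def using assms by (intro cSUP_least) auto

theorem lemma3p6:
  fixes \<sigma> lam :: real
  assumes "0 < \<sigma>" "\<sigma> < 1/3" "0 < lam" "lam < 1/3"
  shows "\<exists>C::real. \<forall>(r::real) (n::nat) (a::nat \<Rightarrow> real) (I1::nat set) (I2::nat set) (m::nat).
    r > 0 \<longrightarrow> n \<ge> 1 \<longrightarrow>
    I1 \<subseteq> {..<n} \<longrightarrow> I2 \<subseteq> {..<n} \<longrightarrow> I1 \<inter> I2 = {} \<longrightarrow>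
    real (card I1) \<ge> \<sigma> * real n \<longrightarrow> real (card I2) \<ge> \<sigma> * real n \<longrightarrow>
    (\<forall>i\<in>I1. \<forall>j\<in>I2. \<bar>a i - a j\<bar> \<ge> r) \<longrightarrow>
    lam * real n \<le> real m \<longrightarrow> real m \<le> (1 - lam) * real n \<longrightarrow>
    levy_conc (map_pmf (\<lambda>b. \<Sum>i<n. a i * b i) (pmf_of_set (slice01 n m))) r
      \<le> C / sqrt (real n)"
  unfolding slice_sum_pmf_def[symmetric]
  by (intro exI[of _ "levy_const \<sigma> lam"] allI impI levy_conc_le prob_near_le) (use assms in auto)

end
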